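(* For every integer $m\ge0$ and every odd positive integer $k$, \[ \sum_{i=0}^{2m}(-1)^i\binom{m+i}{m-i}\binom{m+k-i}{m-k+i}=0 . \]
   Context: Binomial coefficients $\binom{a}{b}$ are taken to be $0$ when $b<0$ or $b>a$ (in particular, whenever the lower index is negative). *)

theory Defs
  imports Main
begin

definition binomz :: "int \<Rightarrow> int \<Rightarrow> int" where
  "binomz a b = (if 0 \<le> b \<and> b \<le> a then int (nat a choose nat b) else 0)"

end

theory Submission
  imports Defs
begin

text \<open>Put \<open>g x = binomz (m + x) (m - x)\<close>; the summand is \<open>(-1)^i g(i) g(k - i)\<close>.
  Since \<open>g\<close> vanishes outside \<open>[0, m]\<close>, the range of summation can be replaced by \<open>[0, k]\<close>,
  and there the reflection \<open>i \<mapsto> k - i\<close> preserves \<open>g(i) g(k - i)\<close> but, \<open>k\<close> being odd,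
  flips the sign \<open>(-1)^i\<close>. So the sum equals its own negative.\<close>

lemma alternating_reflection_sum_eq_0:
  fixes g :: "int \<Rightarrow> 'a::{idom, ring_char_0}"
  assumes "odd k"
  shows "(\<Sum>i=0..k. (-1)^i * g (int i) * g (int k - int i)) = 0"
proof -
  define f where "f i = (-1)^i * g (int i) * g (int k - int i)" for i
  have f_reflect: "f (k - i) = - f i" if "i \<le> k" for i
  proof -
    have "(-1::'a)^(k - i) = - ((-1)^i)"
      using that \<open>odd k\<close> by (auto simp: minus_one_power_iff)
    moreover have "int (k - i) = int k - int i" and "int k - (int k - int i) = int i"
      using that by auto
    ultimately show ?thesis
      by (simp add: f_def)
  qed
  have "sum f {0..k} = sum (\<lambda>i. f (k + 0 - i)) {0..k}"
    by (rule sum.atLeastAtMost_rev)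
  also have "\<dots> = - sum f {0..k}"
    by (simp add: f_reflect sum_negf)
  finally have "sum f {0..k} + sum f {0..k} = 0"
    by (simp only: eq_neg_iff_add_eq_0)
  then have "2 * sum f {0..k} = 0"
    by (simp only: mult_2)
  then show ?thesis
    by (simp add: f_def)
qed

lemma alternating_self_convolution_odd_eq_0:
  fixes g :: "int \<Rightarrow> 'a::{idom, ring_char_0}"
  assumes "odd k" and "m \<le> n"
    and g_neg: "\<And>x. x < 0 \<Longrightarrow> g x = 0"
    and g_large: "\<And>x. x > int m \<Longrightarrow> g x = 0"
  shows "(\<Sum>i=0..n. (-1)^i * g (int i) * g (int k - int i)) = 0"
proof -
  define f where "f i = (-1)^i * g (int i) * g (int k - int i)" for i
  have "sum f {0..n} = sum f {0..n + k}"
    by (rule sum.mono_neutral_left) (use \<open>m \<le> n\<close> in \<open>auto simp: f_def g_large\<close>)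
  also have "\<dots> = sum f {0..k}"
    by (rule sum.mono_neutral_right) (auto simp: f_def g_neg)
  also have "\<dots> = 0"
    unfolding f_def using \<open>odd k\<close> by (rule alternating_reflection_sum_eq_0)
  finally show ?thesis
    by (simp add: f_def)
qed

theorem mainTheorem14:
  fixes m k :: nat
  assumes "odd k"
  shows "(\<Sum>i=0..2*m. (-1::int)^i * binomz (int m + int i) (int m - int i)
            * binomz (int m + int k - int i) (int m - int k + int i)) = 0"
proof -
  define g where "g x = binomz (int m + x) (int m - x)" for x
  have "(\<Sum>i=0..2*m. (-1)^i * g (int i) * g (int k - int i)) = 0"
    by (rule alternating_self_convolution_odd_eq_0[OF \<open>odd k\<close>, of m])
      (auto simp: g_def binomz_def)
  then show ?thesis
    by (simp add: g_def algebra_simps)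
qed

end
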